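(* For all $s > 0$, $$\theta_4''(s)\theta_4(s) - \theta_4'(s)^2 < -\frac{\theta_4'(s)\theta_4(s)}{s} < 0.$$
   Context: For $s>0$, $\theta_4(s) = \sum_{k\in\mathbb{Z}} (-1)^k e^{-\pi k^2 s}$. *)

theory Defs
  imports "HOL-Analysis.Analysis"
begin

text \<open>Jacobi theta function theta_4(s) = sum over integers k of (-1)^k exp(-pi k^2 s),
  meaningful for s > 0 (the series converges absolutely there).\<close>
definition theta4 :: "real \<Rightarrow> real" where
  "theta4 s = (\<Sum>\<^sub>\<infinity>k::int. (-1) powi k * exp (- pi * (of_int k)\<^sup>2 * s))"

end

theory Submission
  imports Defs
begin

text \<open>Put \<open>q = exp (- pi s)\<close>. Jacobi's triple product
  \<open>\<theta>\<^sub>4(s) = (\<Prod>n\<ge>1. (1 - q\<^sup>2\<^sup>n) (1 - q\<^sup>2\<^sup>n\<^sup>-\<^sup>1)\<^sup>2)\<close> is the limit of a finite identity that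
  follows from Cauchy's q-binomial theorem; Tannery's theorem justifies the passage to the limit.
  Hence \<open>ln \<theta>\<^sub>4\<close> is a positive combination of the functions \<open>\<phi> s = ln (1 - exp (- a s))\<close>,
  \<open>a > 0\<close>. Each has \<open>\<phi>' s = a / (exp (a s) - 1) > 0\<close> and \<open>(s \<phi>' s)' < 0\<close>, the latter
  being \<open>exp y (1 - y) < 1\<close> for \<open>y = a s > 0\<close>. Summing termwise,
  \<open>(ln \<theta>\<^sub>4)' > 0\<close> and \<open>s (ln \<theta>\<^sub>4)'' + (ln \<theta>\<^sub>4)' < 0\<close>, which after multiplication by
  \<open>\<theta>\<^sub>4\<^sup>2\<close> is the claim.\<close>

section \<open>Gaussian binomial coefficients\<close>

definition q_pochhammer :: "'a::comm_ring_1 \<Rightarrow> nat \<Rightarrow> 'a" where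
  "q_pochhammer p m = (\<Prod>i<m. 1 - p ^ Suc i)"

fun q_binomial :: "'a::comm_ring_1 \<Rightarrow> nat \<Rightarrow> nat \<Rightarrow> 'a" where
  "q_binomial p 0 0 = 1"
| "q_binomial p 0 (Suc k) = 0"
| "q_binomial p (Suc m) 0 = 1"
| "q_binomial p (Suc m) (Suc k) = q_binomial p m k + p ^ Suc k * q_binomial p m (Suc k)"

lemma q_pochhammer_0 [simp]: "q_pochhammer p 0 = 1"
  by (simp add: q_pochhammer_def)

lemma q_pochhammer_Suc: "q_pochhammer p (Suc m) = q_pochhammer p m * (1 - p ^ Suc m)"
  by (simp add: q_pochhammer_def)

lemma q_binomial_eq_0: "m < k \<Longrightarrow> q_binomial p m k = 0"
proof (induction m arbitrary: k)
  case 0 then show ?case by (cases k) auto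
next
  case (Suc m) then show ?case by (cases k) auto
qed

lemma q_binomial_0_right [simp]: "q_binomial p m 0 = 1"
  by (cases m) auto

lemma q_binomial_diag [simp]: "q_binomial p m m = 1"
  by (induction m) (auto simp: q_binomial_eq_0)

lemma choose_two_Suc: "Suc k choose 2 = (k choose 2) + k"
  by (simp add: numeral_2_eq_2)

lemma double_choose_two_add: "2 * (k choose 2) + k = k * k"
proof -
  have "even (k * (k - 1))" by (cases k) auto
  then show ?thesis by (cases k) (auto simp: choose_two algebra_simps)
qed

lemma q_binomial_theorem:
  "(\<Prod>j<m. 1 + x * p ^ j) = (\<Sum>k\<le>m. q_binomial p m k * p ^ (k choose 2) * x ^ k)"
proof (induction m arbitrary: x)
  case 0 then show ?case by (simp add: numeral_2_eq_2)
next
  case (Suc m)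
  define R where "R = (\<Sum>k\<le>m. q_binomial p m k * p ^ (k choose 2) * (x * p) ^ k)"
  have "(\<Prod>j<Suc m. 1 + x * p ^ j) = (1 + x) * (\<Prod>j<m. 1 + (x * p) * p ^ j)"
    by (subst prod.lessThan_Suc_shift) (simp add: mult.assoc)
  also have "\<dots> = (1 + x) * R" using Suc.IH[of "x * p"] by (simp add: R_def)
  finally have prod: "(\<Prod>j<Suc m. 1 + x * p ^ j) = (1 + x) * R" .
  have "(\<Sum>k\<le>Suc m. q_binomial p (Suc m) k * p ^ (k choose 2) * x ^ k)
     = 1 + (\<Sum>k\<le>m. q_binomial p (Suc m) (Suc k) * p ^ (Suc k choose 2) * x ^ Suc k)"
    by (subst sum.atMost_Suc_shift) (simp add: binomial_eq_0)
  also have "\<dots> = 1 + (\<Sum>k\<le>m. q_binomial p m k * p ^ (Suc k choose 2) * x ^ Suc k)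
       + (\<Sum>k\<le>m. p ^ Suc k * q_binomial p m (Suc k) * p ^ (Suc k choose 2) * x ^ Suc k)"
    by (simp add: sum.distrib algebra_simps)
  also have "(\<Sum>k\<le>m. q_binomial p m k * p ^ (Suc k choose 2) * x ^ Suc k) = x * R"
    unfolding R_def sum_distrib_left
    by (rule sum.cong) (simp_all add: choose_two_Suc power_add power_mult_distrib algebra_simps)
  also have "(\<Sum>k\<le>m. p ^ Suc k * q_binomial p m (Suc k) * p ^ (Suc k choose 2) * x ^ Suc k)
       = (\<Sum>k\<le>Suc m. q_binomial p m k * p ^ (k choose 2) * (x * p) ^ k) - 1"
    by (subst sum.atMost_Suc_shift)
      (simp add: choose_two_Suc binomial_eq_0 power_mult_distrib algebra_simps)
  also have "(\<Sum>k\<le>Suc m. q_binomial p m k * p ^ (k choose 2) * (x * p) ^ k) = R"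
    by (simp add: R_def q_binomial_eq_0)
  finally show ?case using prod by (simp add: algebra_simps)
qed

lemma q_binomial_theorem_homogeneous:
  fixes x y p :: "'a::field"
  assumes "y \<noteq> 0"
  shows "(\<Prod>j<m. y + x * p ^ j) = (\<Sum>k\<le>m. q_binomial p m k * p ^ (k choose 2) * x ^ k * y ^ (m - k))"
proof -
  have "(\<Prod>j<m. y + x * p ^ j) = (\<Prod>j<m. y * (1 + (x / y) * p ^ j))"
    using assms by (intro prod.cong) (simp_all add: field_simps)
  also have "\<dots> = y ^ m * (\<Prod>j<m. 1 + (x / y) * p ^ j)"
    by (simp add: prod.distrib)
  also have "\<dots> = (\<Sum>k\<le>m. y ^ m * (q_binomial p m k * p ^ (k choose 2) * (x / y) ^ k))"
    by (simp only: q_binomial_theorem sum_distrib_left)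
  also have "\<dots> = (\<Sum>k\<le>m. q_binomial p m k * p ^ (k choose 2) * x ^ k * y ^ (m - k))"
  proof (rule sum.cong)
    fix k assume "k \<in> {..m}"
    then have "y ^ m = y ^ k * y ^ (m - k)" by (simp flip: power_add)
    then show "y ^ m * (q_binomial p m k * p ^ (k choose 2) * (x / y) ^ k)
             = q_binomial p m k * p ^ (k choose 2) * x ^ k * y ^ (m - k)"
      using assms by (simp add: power_divide field_simps)
  qed simp
  finally show ?thesis .
qed

lemma q_binomial_mult_q_pochhammer:
  "k \<le> m \<Longrightarrow> q_binomial p m k * q_pochhammer p k * q_pochhammer p (m - k) = q_pochhammer p m"
proof (induction m arbitrary: k)
  case 0 then show ?case by simp
next
  case (Suc m)
  show ?case
  proof (cases k)
    case 0 then show ?thesis by simp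
  next
    case (Suc j)
    show ?thesis
    proof (cases "j = m")
      case True
      then show ?thesis using \<open>k = Suc j\<close> by (simp add: q_binomial_eq_0 q_pochhammer_Suc)
    next
      case False
      with Suc.prems \<open>k = Suc j\<close> have j: "Suc j \<le> m" by auto
      have IH1: "q_binomial p m j * q_pochhammer p j * q_pochhammer p (m - j) = q_pochhammer p m"
        using Suc.IH j by simp
      have IH2: "q_binomial p m (Suc j) * q_pochhammer p (Suc j) * q_pochhammer p (m - Suc j)
          = q_pochhammer p m"
        using Suc.IH j by simp
      have m_j: "m - j = Suc (m - Suc j)" and exps: "Suc (m - Suc j) + Suc j = Suc m"
        using j by auto
      have "q_binomial p (Suc m) k * q_pochhammer p k * q_pochhammer p (Suc m - k)
          = (q_binomial p m j + p ^ Suc j * q_binomial p m (Suc j)) * q_pochhammer p (Suc j)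
            * q_pochhammer p (m - j)"
        using \<open>k = Suc j\<close> by simp
      also have "\<dots> = q_binomial p m j * q_pochhammer p j * q_pochhammer p (m - j) * (1 - p ^ Suc j)
          + p ^ Suc j
            * (q_binomial p m (Suc j) * q_pochhammer p (Suc j) * q_pochhammer p (m - Suc j))
            * (1 - p ^ Suc (m - Suc j))"
        unfolding m_j q_pochhammer_Suc by (simp add: algebra_simps)
      also have "\<dots> = q_pochhammer p m * (1 - p ^ (Suc (m - Suc j) + Suc j))"
        unfolding IH1 IH2 power_add by (simp add: algebra_simps)
      also have "\<dots> = q_pochhammer p (Suc m)"
        unfolding exps q_pochhammer_Suc by simp
      finally show ?thesis .
    qed
  qed
qed

lemma q_pochhammer_pos: "0 \<le> p \<Longrightarrow> p < 1 \<Longrightarrow> 0 < q_pochhammer (p::real) m"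
  unfolding q_pochhammer_def
  by (intro prod_pos) (simp add: power_less_one_iff del: power_Suc)

lemma q_binomial_eq_divide:
  fixes p :: real
  assumes "0 \<le> p" "p < 1" "k \<le> m"
  shows "q_binomial p m k = q_pochhammer p m / (q_pochhammer p k * q_pochhammer p (m - k))"
  using q_binomial_mult_q_pochhammer[OF assms(3), of p] q_pochhammer_pos[OF assms(1,2)]
  by (simp add: eq_divide_eq mult.assoc less_imp_neq[symmetric])

lemma q_binomial_symmetric:
  fixes p :: real
  shows "0 \<le> p \<Longrightarrow> p < 1 \<Longrightarrow> k \<le> m \<Longrightarrow> q_binomial p m (m - k) = q_binomial p m k"
  by (simp add: q_binomial_eq_divide)

lemma q_binomial_nonneg: "0 \<le> p \<Longrightarrow> 0 \<le> q_binomial (p::real) m k"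
proof (induction m arbitrary: k)
  case 0 then show ?case by (cases k) auto
next
  case (Suc m) then show ?case by (cases k) auto
qed

section \<open>A finite form of the triple product\<close>

lemma q_binomial_expansion_odd_powers:
  fixes q :: "'a::field"
  assumes "q \<noteq> 0"
  shows "(\<Prod>j<m. q ^ m - q ^ (2 * j + 1))
       = (\<Sum>k\<le>m. (-1) ^ k * q_binomial (q\<^sup>2) m k * q ^ (k * k + m * (m - k)))"
proof -
  have "(\<Prod>j<m. q ^ m - q ^ (2 * j + 1)) = (\<Prod>j<m. q ^ m + (- q) * (q\<^sup>2) ^ j)"
    by (simp add: power_mult)
  also have "\<dots> = (\<Sum>k\<le>m. q_binomial (q\<^sup>2) m k * (q\<^sup>2) ^ (k choose 2) * (- q) ^ k * (q ^ m) ^ (m - k))"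
    using assms by (intro q_binomial_theorem_homogeneous) simp
  also have "\<dots> = (\<Sum>k\<le>m. (-1) ^ k * q_binomial (q\<^sup>2) m k * q ^ (k * k + m * (m - k)))"
  proof (rule sum.cong)
    fix k
    have "q ^ (k * k + m * (m - k)) = (q\<^sup>2) ^ (k choose 2) * q ^ k * (q ^ m) ^ (m - k)"
      by (simp flip: double_choose_two_add add: power_add power_mult)
    then show "q_binomial (q\<^sup>2) m k * (q\<^sup>2) ^ (k choose 2) * (- q) ^ k * (q ^ m) ^ (m - k)
             = (-1) ^ k * q_binomial (q\<^sup>2) m k * q ^ (k * k + m * (m - k))"
      by (simp add: power_minus[of q k])
  qed simp
  finally show ?thesis .
qed

lemma prod_odd_powers: "(\<Prod>j<n. q ^ (2 * j + 1)) = q ^ (n * n)"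
proof (induction n)
  case (Suc n)
  have "n * n + (2 * n + 1) = Suc n * Suc n" by simp
  then show ?case using Suc by (simp only: prod.lessThan_Suc flip: power_add)
qed simp

lemma prod_lessThan_double:
  fixes n :: nat
  shows "prod g {..<n + n} = prod g {..<n} * prod (\<lambda>i. g (n + i)) {..<n}"
  by (simp add: prod.atLeastLessThan_concat lessThan_atLeast0 add.commute
      flip: prod.shift_bounds_nat_ivl[of g 0 n n])

lemma sum_atMost_double_symmetric:
  "sum g {..n + n} = g n + (\<Sum>j<n. g (n + Suc j) + g (n - Suc j))"
proof -
  have "{..n + n} = {..<n} \<union> {n..n + n}" by auto
  then have "sum g {..n + n} = sum g {..<n} + sum g {n..n + n}"
    by (simp add: sum.union_disjoint ivl_disj_int)
  also have "sum g {n..n + n} = (\<Sum>i\<le>n. g (i + n))"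
    using sum.shift_bounds_cl_nat_ivl[of g 0 n n] by (simp add: atLeast0AtMost)
  also have "\<dots> = g n + (\<Sum>i<n. g (n + Suc i))"
    by (simp add: sum.atMost_shift add.commute)
  also have "sum g {..<n} = (\<Sum>i<n. g (n - Suc i))"
    by (simp add: sum.nat_diff_reindex)
  finally show ?thesis by (simp add: sum.distrib add_ac)
qed

lemma prod_pow_minus_odd_powers:
  fixes q :: "'a::comm_ring_1"
  shows "(\<Prod>j<n + n. q ^ (n + n) - q ^ (2 * j + 1))
       = (-1) ^ n * q ^ (3 * (n * n)) * (\<Prod>i<n. 1 - q ^ (2 * i + 1))\<^sup>2"
proof -
  define Q where "Q = (\<Prod>i<n. 1 - q ^ (2 * i + 1))"
  have lower: "(\<Prod>j<n. q ^ (n + n) - q ^ (2 * j + 1)) = (-1) ^ n * q ^ (n * n) * Q"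
  proof -
    have "(\<Prod>j<n. q ^ (n + n) - q ^ (2 * j + 1))
        = (\<Prod>j<n. - (q ^ (2 * j + 1)) * (1 - q ^ (2 * (n - Suc j) + 1)))"
    proof (rule prod.cong)
      fix j assume "j \<in> {..<n}"
      then have "n + n = (2 * j + 1) + (2 * (n - Suc j) + 1)" by auto
      then show "q ^ (n + n) - q ^ (2 * j + 1)
               = - (q ^ (2 * j + 1)) * (1 - q ^ (2 * (n - Suc j) + 1))"
        by (simp only: power_add) (simp add: algebra_simps)
    qed simp
    also have "\<dots> = (\<Prod>j<n. - (q ^ (2 * j + 1))) * (\<Prod>j<n. 1 - q ^ (2 * (n - Suc j) + 1))"
      by (rule prod.distrib)
    also have "(\<Prod>j<n. 1 - q ^ (2 * (n - Suc j) + 1)) = Q"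
      unfolding Q_def by (rule prod.nat_diff_reindex)
    finally show ?thesis by (simp only: prod_uminus prod_odd_powers card_lessThan)
  qed
  have upper: "(\<Prod>i<n. q ^ (n + n) - q ^ (2 * (n + i) + 1)) = q ^ ((n + n) * n) * Q"
  proof -
    have "q ^ (n + n) - q ^ (2 * (n + i) + 1) = q ^ (n + n) * (1 - q ^ (2 * i + 1))" for i
      by (simp add: algebra_simps flip: power_add)
    then show ?thesis by (simp add: Q_def prod.distrib power_mult)
  qed
  have "n * n + (n + n) * n = 3 * (n * n)" by simp
  then have exponent: "q ^ (n * n) * q ^ ((n + n) * n) = q ^ (3 * (n * n))"
    by (simp only: power_add[symmetric])
  then show ?thesis
    unfolding prod_lessThan_double lower upper Q_def[symmetric]
    by (simp add: power2_eq_square mult_ac flip: exponent)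
qed

lemma odd_square_exponent:
  assumes "a \<le> (n::nat)"
  shows "(n + a) * (n + a) + (n + n) * (n + n - (n + a)) = 3 * (n * n) + a * a"
    and "(n - a) * (n - a) + (n + n) * (n + n - (n - a)) = 3 * (n * n) + a * a"
proof -
  obtain b where "n = a + b" using assms le_Suc_ex by blast
  then show "(n + a) * (n + a) + (n + n) * (n + n - (n + a)) = 3 * (n * n) + a * a"
    and "(n - a) * (n - a) + (n + n) * (n + n - (n - a)) = 3 * (n * n) + a * a"
    by (simp_all add: algebra_simps)
qed

lemma odd_q_pochhammer_square_finite:
  fixes q :: real
  assumes "0 < q" "q < 1"
  shows "(\<Prod>i<n. 1 - q ^ (2 * i + 1))\<^sup>2 = q_binomial (q\<^sup>2) (n + n) n
     + 2 * (\<Sum>j<n. (-1) ^ Suc j * q_binomial (q\<^sup>2) (n + n) (n + Suc j) * q ^ (Suc j * Suc j))"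
proof -
  define G where "G k = q_binomial (q\<^sup>2) (n + n) k" for k
  define F where "F k = (-1) ^ k * G k * q ^ (k * k + (n + n) * (n + n - k))" for k
  define C where "C = (-1::real) ^ n * q ^ (3 * (n * n))"
  define X where "X j = (-1) ^ Suc j * G (n + Suc j) * q ^ (Suc j * Suc j)" for j
  have p: "0 \<le> q\<^sup>2" "q\<^sup>2 < 1" using assms by (simp_all add: power_less_one_iff)
  have pair: "F (n + Suc j) + F (n - Suc j) = 2 * (C * X j)" if "j < n" for j
  proof -
    have j: "Suc j \<le> n" using that by simp
    have "G (n - Suc j) = G (n + Suc j)"
      using q_binomial_symmetric[OF p, of "n - Suc j" "n + n"] j by (simp add: G_def)
    moreover have "(-1::real) ^ (n - Suc j) = (-1) ^ n * (-1) ^ Suc j"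
      using j by (simp add: power_diff_conv_inverse)
    ultimately show ?thesis
      unfolding F_def C_def X_def odd_square_exponent[OF j]
      by (simp add: power_add power_mult power2_eq_square algebra_simps)
  qed
  have central: "F n = C * G n"
  proof -
    have "n * n + (n + n) * (n + n - n) = 3 * (n * n)" by simp
    then show ?thesis by (simp only: F_def C_def mult_ac)
  qed
  have "C * (\<Prod>i<n. 1 - q ^ (2 * i + 1))\<^sup>2 = (\<Sum>k\<le>n + n. F k)"
    using q_binomial_expansion_odd_powers[of q "n + n"] prod_pow_minus_odd_powers[of q n] assms
    by (simp add: C_def F_def G_def)
  also have "\<dots> = C * G n + (\<Sum>j<n. 2 * (C * X j))"
    unfolding sum_atMost_double_symmetric central
    by (intro arg_cong2[where f = "(+)"] sum.cong refl pair) simp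
  also have "\<dots> = C * (G n + 2 * (\<Sum>j<n. X j))"
    by (simp add: sum_distrib_left algebra_simps)
  finally show ?thesis
    using assms by (simp add: C_def G_def X_def)
qed

section \<open>The triple product for \<open>\<theta>\<^sub>4\<close>\<close>

lemma abs_ln_one_minus_le:
  fixes y :: real
  assumes "0 \<le> y" "y < 1"
  shows "\<bar>ln (1 - y)\<bar> \<le> y / (1 - y)"
proof -
  have "- ln (1 - y) \<le> y / (1 - y)"
    using assms ln_le_minus_one[of "1 / (1 - y)"] by (simp add: ln_div field_simps)
  then show ?thesis using assms by simp
qed

lemma tendsto_prod_one_minus:
  fixes b :: "nat \<Rightarrow> real"
  assumes "\<And>i. 0 \<le> b i" "\<And>i. b i \<le> c" "c < 1" "summable b"
  shows "(\<lambda>n. \<Prod>i<n. 1 - b i) \<longlonglongrightarrow> exp (\<Sum>i. ln (1 - b i))"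
proof -
  have b_less_1: "b i < 1" for i
    using assms(2,3) by (rule le_less_trans)
  have "\<bar>ln (1 - b i)\<bar> \<le> b i / (1 - c)" for i
  proof -
    have "\<bar>ln (1 - b i)\<bar> \<le> b i / (1 - b i)"
      using assms(1) b_less_1 by (rule abs_ln_one_minus_le)
    also have "\<dots> \<le> b i / (1 - c)"
      using assms b_less_1[of i] by (intro divide_left_mono) auto
    finally show ?thesis .
  qed
  then have "summable (\<lambda>i. ln (1 - b i))"
    by (intro summable_comparison_test'[OF summable_divide[OF assms(4)]]) simp
  moreover have "(\<Prod>i<n. 1 - b i) = exp (\<Sum>i<n. ln (1 - b i))" for n
  proof -
    have "(\<Prod>i<n. 1 - b i) = (\<Prod>i<n. exp (ln (1 - b i)))"
      using b_less_1 by simp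
    then show ?thesis by (simp add: exp_sum)
  qed
  ultimately show ?thesis
    using tendsto_exp[OF summable_LIMSEQ] by simp
qed

definition q_pochhammer_inf :: "real \<Rightarrow> real" where
  "q_pochhammer_inf p = exp (\<Sum>i. ln (1 - p ^ Suc i))"

lemma q_pochhammer_inf_pos: "0 < q_pochhammer_inf p"
  by (simp add: q_pochhammer_inf_def)

lemma tendsto_q_pochhammer:
  fixes p :: real
  assumes "0 \<le> p" "p < 1"
  shows "q_pochhammer p \<longlonglongrightarrow> q_pochhammer_inf p"
  unfolding q_pochhammer_def[abs_def] q_pochhammer_inf_def
proof (rule tendsto_prod_one_minus[where c = p])
  show "p ^ Suc i \<le> p" for i
    using assms by (simp add: power_le_one mult_left_le)
  show "summable (\<lambda>i. p ^ Suc i)"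
    using assms by (simp add: summable_geometric)
qed (use assms in simp_all)

lemma decseq_q_pochhammer:
  fixes p :: real
  assumes "0 \<le> p" "p < 1"
  shows "decseq (q_pochhammer p)"
proof (rule decseq_SucI)
  fix m
  show "q_pochhammer p (Suc m) \<le> q_pochhammer p m"
    using assms q_pochhammer_pos[OF assms, of m]
    by (simp add: q_pochhammer_Suc mult_left_le del: power_Suc)
qed

lemma q_pochhammer_inf_le:
  fixes p :: real
  shows "0 \<le> p \<Longrightarrow> p < 1 \<Longrightarrow> q_pochhammer_inf p \<le> q_pochhammer p m"
  using decseq_ge[OF decseq_q_pochhammer tendsto_q_pochhammer] by blast

lemma q_binomial_le:
  fixes p :: real
  assumes "0 \<le> p" "p < 1"
  shows "q_binomial p m k \<le> 1 / q_pochhammer_inf p"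
proof (cases "k \<le> m")
  case True
  have pos: "0 < q_pochhammer p k" "0 < q_pochhammer p (m - k)"
    using q_pochhammer_pos assms by auto
  have "q_pochhammer p m \<le> q_pochhammer p k"
    using decseq_q_pochhammer[OF assms] True by (simp add: decseq_def)
  then have "q_binomial p m k \<le> q_pochhammer p k / (q_pochhammer p k * q_pochhammer p (m - k))"
    unfolding q_binomial_eq_divide[OF assms True] using pos by (intro divide_right_mono) auto
  also have "\<dots> = 1 / q_pochhammer p (m - k)" using pos by simp
  also have "\<dots> \<le> 1 / q_pochhammer_inf p"
    using q_pochhammer_inf_le[OF assms] q_pochhammer_inf_pos pos by (intro divide_left_mono) auto
  finally show ?thesis .
next
  case False
  then show ?thesis using q_binomial_eq_0[of m k p] q_pochhammer_inf_pos[of p] by simp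
qed

lemma tendsto_central_q_binomial:
  fixes p :: real
  assumes "0 \<le> p" "p < 1"
  shows "(\<lambda>n. q_binomial p (n + n) (n + k)) \<longlonglongrightarrow> 1 / q_pochhammer_inf p"
proof -
  let ?P = "q_pochhammer p" and ?L = "q_pochhammer_inf p"
  have lim: "?P \<longlonglongrightarrow> ?L" by (rule tendsto_q_pochhammer[OF assms])
  have "(\<lambda>n. ?P (n + n) / (?P (n + k) * ?P (n - k))) \<longlonglongrightarrow> ?L / (?L * ?L)"
  proof (intro tendsto_intros)
    show "(\<lambda>n. ?P (n + n)) \<longlonglongrightarrow> ?L"
      using LIMSEQ_subseq_LIMSEQ[OF lim, of "\<lambda>n. n + n"] by (simp add: strict_mono_def o_def)
    show "(\<lambda>n. ?P (n + k)) \<longlonglongrightarrow> ?L"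
      using LIMSEQ_ignore_initial_segment[OF lim, of k] by simp
    show "(\<lambda>n. ?P (n - k)) \<longlonglongrightarrow> ?L"
      by (rule LIMSEQ_offset[where k = k]) (simp add: lim)
  qed (use q_pochhammer_inf_pos[of p] in simp)
  moreover have "\<forall>\<^sub>F n in sequentially.
      ?P (n + n) / (?P (n + k) * ?P (n - k)) = q_binomial p (n + n) (n + k)"
  proof (rule eventually_sequentiallyI[of k])
    fix n assume "k \<le> n"
    then show "?P (n + n) / (?P (n + k) * ?P (n - k)) = q_binomial p (n + n) (n + k)"
      using q_binomial_eq_divide[OF assms, of "n + k" "n + n"] by simp
  qed
  ultimately show ?thesis
    using q_pochhammer_inf_pos[of p] by (simp add: Lim_transform_eventually)
qed

lemma tendsto_q_binomial_weighted_sum: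
  fixes p :: real and s :: "nat \<Rightarrow> real"
  assumes "0 \<le> p" "p < 1" "summable (\<lambda>k. \<bar>s k\<bar>)"
  shows "(\<lambda>n. \<Sum>k<n. q_binomial p (n + n) (n + Suc k) * s k)
    \<longlonglongrightarrow> (\<Sum>k. s k) / q_pochhammer_inf p"
proof -
  define a where "a k n = q_binomial p (n + n) (n + Suc k) * s k" for k n
  have "(\<lambda>n. \<Sum>k. a k n) \<longlonglongrightarrow> (\<Sum>k. s k / q_pochhammer_inf p)"
  proof (rule tannerys_theorem[where M = "\<lambda>k. \<bar>s k\<bar> / q_pochhammer_inf p",
        THEN conjunct2, THEN conjunct2])
    show "((\<lambda>n. a k n) \<longlongrightarrow> s k / q_pochhammer_inf p) sequentially" for k
      using tendsto_mult_right[OF tendsto_central_q_binomial[OF assms(1,2), of "Suc k"], of "s k"]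
      by (simp add: a_def)
    have "norm (a k n) \<le> \<bar>s k\<bar> / q_pochhammer_inf p" for k n
    proof -
      have "norm (a k n) = q_binomial p (n + n) (n + Suc k) * \<bar>s k\<bar>"
        using q_binomial_nonneg[OF assms(1)] by (simp add: a_def abs_mult)
      also have "\<dots> \<le> 1 / q_pochhammer_inf p * \<bar>s k\<bar>"
        by (intro mult_right_mono q_binomial_le assms(1,2) abs_ge_zero)
      finally show ?thesis by simp
    qed
    then show "\<forall>\<^sub>F (k, n) in at_top \<times>\<^sub>F sequentially.
        norm (a k n) \<le> \<bar>s k\<bar> / q_pochhammer_inf p"
      by (simp add: always_eventually)
    show "summable (\<lambda>k. \<bar>s k\<bar> / q_pochhammer_inf p)"
      using assms(3) by (rule summable_divide)
  qed simp
  moreover have "(\<Sum>k. a k n) = (\<Sum>k<n. a k n)" for n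
    by (rule suminf_finite) (auto simp: a_def q_binomial_eq_0)
  moreover have "(\<Sum>k. s k / q_pochhammer_inf p) = (\<Sum>k. s k) / q_pochhammer_inf p"
    by (rule suminf_divide[OF summable_rabs_cancel[OF assms(3)]])
  ultimately show ?thesis by (simp add: a_def)
qed

lemma summable_abs_theta_coefficients:
  fixes q :: real
  assumes "0 < q" "q < 1"
  shows "summable (\<lambda>k. \<bar>(-1) ^ Suc k * q ^ (Suc k * Suc k)\<bar>)"
proof (rule summable_comparison_test')
  show "summable (\<lambda>k. q ^ Suc k)" using assms by (simp add: summable_geometric)
  show "norm \<bar>(-1) ^ Suc k * q ^ (Suc k * Suc k)\<bar> \<le> q ^ Suc k" for k
    using assms by (simp add: abs_mult power_decreasing)
qed

lemma jacobi_triple_product_theta4: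
  fixes q :: real
  assumes "0 < q" "q < 1"
  shows "1 + 2 * (\<Sum>k. (-1) ^ Suc k * q ^ (Suc k * Suc k))
       = q_pochhammer_inf (q\<^sup>2) * exp (\<Sum>i. ln (1 - q ^ (2 * i + 1))) ^ 2"
proof -
  define p where "p = q\<^sup>2"
  define s where "s k = (-1) ^ Suc k * q ^ (Suc k * Suc k)" for k
  define Q_odd where "Q_odd = exp (\<Sum>i. ln (1 - q ^ (2 * i + 1)))"
  have p: "0 \<le> p" "p < 1" using assms by (simp_all add: p_def power_less_one_iff)
  have "summable (\<lambda>k. \<bar>s k\<bar>)"
    unfolding s_def using assms by (rule summable_abs_theta_coefficients)
  then have lim_rhs: "(\<lambda>n. q_binomial p (n + n) (n + 0)
        + 2 * (\<Sum>k<n. q_binomial p (n + n) (n + Suc k) * s k))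
      \<longlonglongrightarrow> 1 / q_pochhammer_inf p + 2 * ((\<Sum>k. s k) / q_pochhammer_inf p)"
    using p by (intro tendsto_add tendsto_mult_left tendsto_central_q_binomial
        tendsto_q_binomial_weighted_sum)
  have lim_lhs: "(\<lambda>n. (\<Prod>i<n. 1 - q ^ (2 * i + 1))\<^sup>2) \<longlonglongrightarrow> Q_odd\<^sup>2"
  proof (intro tendsto_intros)
    show "(\<lambda>n. \<Prod>i<n. 1 - q ^ (2 * i + 1)) \<longlonglongrightarrow> Q_odd"
      unfolding Q_odd_def
    proof (rule tendsto_prod_one_minus[where c = q])
      show "q ^ (2 * i + 1) \<le> q" for i
        using assms by (simp add: power_le_one mult_left_le)
      show "summable (\<lambda>i. q ^ (2 * i + 1))"
        using assms by (simp add: power_mult summable_geometric power_less_one_iff)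
    qed (use assms in simp_all)
  qed
  have "(\<Prod>i<n. 1 - q ^ (2 * i + 1))\<^sup>2
      = q_binomial p (n + n) (n + 0) + 2 * (\<Sum>k<n. q_binomial p (n + n) (n + Suc k) * s k)" for n
    using odd_q_pochhammer_square_finite[OF assms] by (simp add: p_def s_def mult_ac)
  then have "Q_odd\<^sup>2 = 1 / q_pochhammer_inf p + 2 * ((\<Sum>k. s k) / q_pochhammer_inf p)"
    using LIMSEQ_unique[OF lim_lhs] lim_rhs by simp
  then show ?thesis
    using q_pochhammer_inf_pos[of p] by (simp add: field_simps Q_odd_def p_def s_def)
qed

lemma has_sum_int_symmetric:
  fixes t :: "int \<Rightarrow> real"
  assumes even: "\<And>k. t (- k) = t k" and summable: "summable (\<lambda>n. \<bar>t (int (Suc n))\<bar>)"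
  shows "(t has_sum (t 0 + 2 * (\<Sum>n. t (int (Suc n))))) UNIV"
proof -
  define u where "u n = t (int (Suc n))" for n
  have "summable (\<lambda>n. norm (u n))"
    using summable by (simp add: u_def)
  then have u: "(u has_sum (\<Sum>n. u n)) UNIV"
    using norm_summable_imp_has_sum summable_sums summable_norm_cancel by blast
  have "t \<circ> (\<lambda>n. int (Suc n)) = u" "t \<circ> (\<lambda>n. - int (Suc n)) = u"
    by (simp_all only: fun_eq_iff o_def u_def even simp_thms)
  then have pos: "(t has_sum (\<Sum>n. u n)) (range (\<lambda>n. int (Suc n)))"
    and neg: "(t has_sum (\<Sum>n. u n)) (range (\<lambda>n. - int (Suc n)))"
    using u by (simp_all add: has_sum_reindex inj_on_def)
  have univ: "UNIV = ({0} \<union> range (\<lambda>n. int (Suc n))) \<union> range (\<lambda>n. - int (Suc n))"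
  proof -
    have "k \<in> range (\<lambda>n. int (Suc n)) \<union> range (\<lambda>n. - int (Suc n))" if "k \<noteq> 0" for k :: int
    proof (cases "k > 0")
      case True
      then have "k = int (Suc (nat k - 1))" by simp
      then show ?thesis by blast
    next
      case False
      with that have "k = - int (Suc (nat (- k) - 1))" by simp
      then show ?thesis by blast
    qed
    then show ?thesis by blast
  qed
  have "(t has_sum t 0) {0}"
    using has_sum_finite[of "{0}" t] by simp
  then have "(t has_sum (t 0 + (\<Sum>n. u n) + (\<Sum>n. u n))) UNIV"
    unfolding univ by (intro has_sum_Un_disjoint pos neg) auto
  then show ?thesis by (simp add: u_def add.commute)
qed

lemma theta4_eq_series:
  assumes "0 < s"
  shows "theta4 s = 1 + 2 * (\<Sum>k. (-1) ^ Suc k * exp (- pi * s) ^ (Suc k * Suc k))"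
proof -
  define t where "t k = (-1) powi k * exp (- pi * (of_int k)\<^sup>2 * s)" for k :: int
  have t_Suc: "t (int (Suc n)) = (-1) ^ Suc n * exp (- pi * s) ^ (Suc n * Suc n)" for n
  proof -
    have "exp (- pi * (of_int (int (Suc n)))\<^sup>2 * s) = exp (real (Suc n * Suc n) * (- pi * s))"
      by (simp only: of_int_of_nat_eq of_nat_mult power2_eq_square mult_ac)
    then show ?thesis by (simp only: t_def power_int_of_nat exp_of_nat_mult)
  qed
  have "(t has_sum (t 0 + 2 * (\<Sum>n. t (int (Suc n))))) UNIV"
  proof (rule has_sum_int_symmetric)
    show "t (- k) = t k" for k
      by (simp add: t_def power_int_minus_one_minus)
    show "summable (\<lambda>n. \<bar>t (int (Suc n))\<bar>)"
      unfolding t_Suc using assms by (intro summable_abs_theta_coefficients) simp_all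
  qed
  then have "theta4 s = t 0 + 2 * (\<Sum>n. t (int (Suc n)))"
    unfolding theta4_def t_def[symmetric] by (rule infsumI)
  then show ?thesis by (simp only: t_Suc) (simp add: t_def)
qed

section \<open>Logarithms of the factors\<close>

lemma exp_minus_one_ge_power_div_fact:
  fixes y :: real
  assumes "0 \<le> y" "n \<noteq> 0"
  shows "y ^ n / fact n \<le> exp y - 1"
proof -
  have sums: "(\<lambda>k. y ^ k / fact k) sums exp y"
    using exp_converges[of y] by (simp add: divide_inverse_commute scaleR_conv_of_real)
  have "(\<Sum>k\<in>{0, n}. y ^ k / fact k) \<le> (\<Sum>k. y ^ k / fact k)"
    using assms by (intro sum_le_suminf sums_summable[OF sums]) auto
  then show ?thesis using assms sums_unique[OF sums] by simp
qed

lemma exp_mult_one_minus_less_one: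
  fixes y :: real
  assumes "0 < y"
  shows "exp y * (1 - y) < 1"
proof (cases "y < 1")
  case True
  have "1 - y < exp (- y)"
  proof -
    have "1 - y/2 \<le> exp (- (y/2))" using exp_ge_add_one_self[of "- (y/2)"] by simp
    then have "(1 - y/2) ^ 2 \<le> exp (- (y/2)) ^ 2" using True by (intro power_mono) auto
    also have "exp (- (y/2)) ^ 2 = exp (- y)" by (simp flip: exp_of_nat_mult)
    finally have "1 - y + y\<^sup>2 / 4 \<le> exp (- y)" by (simp add: power2_eq_square algebra_simps)
    moreover have "0 < y\<^sup>2 / 4" using assms by simp
    ultimately show ?thesis by linarith
  qed
  then show ?thesis by (simp add: exp_minus field_simps)
next
  case False
  then show ?thesis by (simp add: mult_nonneg_nonpos order.strict_trans1[of _ 0 1])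
qed

definition log_factor :: "real \<Rightarrow> real \<Rightarrow> real" where
  "log_factor a x = ln (1 - exp (- (a * x)))"

definition log_factor' :: "real \<Rightarrow> real \<Rightarrow> real" where
  "log_factor' a x = a / (exp (a * x) - 1)"

definition log_factor'' :: "real \<Rightarrow> real \<Rightarrow> real" where
  "log_factor'' a x = - (a\<^sup>2 * exp (a * x)) / (exp (a * x) - 1)\<^sup>2"

lemma has_field_derivative_log_factor:
  assumes "0 < a" "0 < x"
  shows "(log_factor a has_field_derivative log_factor' a x) (at x)"
proof -
  have "exp (- (a * x)) < 1" using assms by simp
  then have "(log_factor a has_field_derivative
      1 / (1 - exp (- (a * x))) * (exp (- (a * x)) * a)) (at x)"
    unfolding log_factor_def[abs_def]
    by (intro DERIV_chain2[OF DERIV_ln_divide]) (auto intro!: derivative_eq_intros)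
  moreover have "1 / (1 - exp (- (a * x))) * (exp (- (a * x)) * a) = log_factor' a x"
    using assms by (simp add: log_factor'_def exp_minus field_simps)
  ultimately show ?thesis by simp
qed

lemma has_field_derivative_log_factor':
  assumes "0 < a" "0 < x"
  shows "(log_factor' a has_field_derivative log_factor'' a x) (at x)"
proof -
  have "exp (a * x) - 1 \<noteq> 0" using assms by simp
  then show ?thesis
    unfolding log_factor'_def[abs_def] log_factor''_def
    by (auto intro!: derivative_eq_intros simp: power2_eq_square algebra_simps)
qed

lemma log_factor'_pos: "0 < a \<Longrightarrow> 0 < x \<Longrightarrow> 0 < log_factor' a x"
  by (simp add: log_factor'_def)

lemma log_factor_derivs_combination_neg:
  assumes "0 < a" "0 < x"
  shows "x * log_factor'' a x + log_factor' a x < 0"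
proof -
  define E where "E = exp (a * x)"
  have "1 < E" using assms by (simp add: E_def)
  have "E * (1 - a * x) < 1"
    unfolding E_def using assms by (intro exp_mult_one_minus_less_one) simp
  then have "a * (E - 1 - a * x * E) / (E - 1)\<^sup>2 < 0"
    using \<open>1 < E\<close> assms by (intro divide_neg_pos mult_pos_neg) (auto simp: algebra_simps)
  moreover have "x * log_factor'' a x + log_factor' a x = a * (E - 1 - a * x * E) / (E - 1)\<^sup>2"
  proof -
    have "log_factor' a x = a * (E - 1) / (E - 1)\<^sup>2"
      using \<open>1 < E\<close> by (simp add: log_factor'_def E_def[symmetric] power2_eq_square)
    moreover have "x * log_factor'' a x = - (a * (a * x) * E) / (E - 1)\<^sup>2"
      by (simp add: log_factor''_def E_def[symmetric] power2_eq_square mult_ac)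
    ultimately show ?thesis by (simp add: add_divide_distrib[symmetric] algebra_simps)
  qed
  ultimately show ?thesis by simp
qed

lemma abs_log_factor_le:
  assumes "0 < a" "0 < x"
  shows "\<bar>log_factor a x\<bar> \<le> (2 / x\<^sup>2) / a\<^sup>2"
proof -
  have "\<bar>log_factor a x\<bar> \<le> exp (- (a * x)) / (1 - exp (- (a * x)))"
    unfolding log_factor_def using assms by (intro abs_ln_one_minus_le) simp_all
  also have "\<dots> = 1 / (exp (a * x) - 1)"
    using assms by (simp add: exp_minus field_simps)
  also have "\<dots> \<le> 1 / ((a * x)\<^sup>2 / 2)"
    using exp_minus_one_ge_power_div_fact[of "a * x" 2] assms
    by (intro divide_left_mono) (simp_all add: numeral_2_eq_2)
  also have "\<dots> = (2 / x\<^sup>2) / a\<^sup>2" by (simp add: power_mult_distrib)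
  finally show ?thesis .
qed

lemma abs_log_factor'_le:
  assumes "0 < a" "0 < x\<^sub>0" "x\<^sub>0 \<le> x"
  shows "\<bar>log_factor' a x\<bar> \<le> (6 / x\<^sub>0 ^ 3) / a\<^sup>2"
proof -
  have "\<bar>log_factor' a x\<bar> = a / (exp (a * x) - 1)"
    using log_factor'_pos[of a x] assms unfolding log_factor'_def by simp
  also have "\<dots> \<le> a / ((a * x) ^ 3 / 6)"
    using exp_minus_one_ge_power_div_fact[of "a * x" 3] assms
    by (intro divide_left_mono) (simp_all add: fact_numeral)
  also have "\<dots> = (6 / x ^ 3) / a\<^sup>2"
    using assms by (simp add: power_mult_distrib eval_nat_numeral)
  also have "\<dots> \<le> (6 / x\<^sub>0 ^ 3) / a\<^sup>2"
    using assms by (intro divide_right_mono divide_left_mono power_mono) auto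
  finally show ?thesis .
qed

lemma abs_log_factor''_le:
  assumes "0 < a" "0 < x\<^sub>0" "x\<^sub>0 \<le> x"
  shows "\<bar>log_factor'' a x\<bar> \<le> (28 / x\<^sub>0 ^ 4) / a\<^sup>2"
proof -
  define E where "E = exp (a * x) - 1"
  have E2: "(a * x)\<^sup>2 / 2 \<le> E" and E4: "(a * x) ^ 4 / 24 \<le> E"
    using exp_minus_one_ge_power_div_fact[of "a * x" 2]
      exp_minus_one_ge_power_div_fact[of "a * x" 4] assms
    by (simp_all add: E_def fact_numeral)
  have "0 < (a * x) ^ 4 / 24" using assms by simp
  then have "0 < E" using E4 by linarith
  have "exp (a * x) = E + 1" by (simp add: E_def)
  then have "\<bar>log_factor'' a x\<bar> = a\<^sup>2 * (E + 1) / E\<^sup>2"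
    using \<open>0 < E\<close> by (simp add: log_factor''_def E_def[symmetric] abs_divide abs_mult)
  also have "\<dots> = a\<^sup>2 / E + a\<^sup>2 / E\<^sup>2"
    using \<open>0 < E\<close> by (simp add: field_simps power2_eq_square)
  also have "\<dots> \<le> a\<^sup>2 / ((a * x) ^ 4 / 24) + a\<^sup>2 / ((a * x)\<^sup>2 / 2)\<^sup>2"
    using E2 E4 \<open>0 < E\<close> assms by (intro add_mono divide_left_mono power_mono mult_pos_pos) auto
  also have "\<dots> = (28 / x ^ 4) / a\<^sup>2"
    using assms by (simp add: power_mult_distrib field_simps eval_nat_numeral)
  also have "\<dots> \<le> (28 / x\<^sub>0 ^ 4) / a\<^sup>2"
    using assms by (intro divide_right_mono divide_left_mono power_mono) auto
  finally show ?thesis .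
qed

section \<open>The logarithmic derivatives of \<open>\<theta>\<^sub>4\<close>\<close>

text \<open>With \<open>q = exp (- pi x)\<close>, the factors \<open>1 - q\<^sup>2\<^sup>i\<^sup>+\<^sup>2\<close> and \<open>(1 - q\<^sup>2\<^sup>i\<^sup>+\<^sup>1)\<^sup>2\<close> of the
  triple product are \<open>1 - exp (- a x)\<close> with \<open>a = 2 pi (i + 1)\<close>, resp. \<open>a = pi (2 i + 1)\<close>.\<close>
definition theta4_weighted :: "(real \<Rightarrow> real) \<Rightarrow> nat \<Rightarrow> real" where
  "theta4_weighted h i = h (2 * pi * real (Suc i)) + 2 * h (pi * (2 * real i + 1))"

lemma theta4_frequencies_ge:
  shows "real (Suc i) \<le> 2 * pi * real (Suc i)" and "real (Suc i) \<le> pi * (2 * real i + 1)"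
proof -
  have "1 * real (Suc i) \<le> 2 * pi * real (Suc i)"
    using pi_gt3 by (intro mult_right_mono) simp_all
  then show "real (Suc i) \<le> 2 * pi * real (Suc i)" by simp
  have "real (Suc i) \<le> 1 * (2 * real i + 1)" by simp
  also have "\<dots> \<le> pi * (2 * real i + 1)"
    using pi_gt3 by (intro mult_right_mono) simp_all
  finally show "real (Suc i) \<le> pi * (2 * real i + 1)" .
qed

lemma inverse_square_le_inverse_square_Suc:
  fixes K a :: real
  assumes "0 \<le> K" "real (Suc i) \<le> a"
  shows "K / a\<^sup>2 \<le> K / real (Suc i) ^ 2"
  using assms by (intro divide_left_mono power_mono) auto

lemma abs_theta4_weighted_le:
  assumes "\<And>a. 1 \<le> a \<Longrightarrow> \<bar>h a\<bar> \<le> K / a\<^sup>2"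
  shows "\<bar>theta4_weighted h i\<bar> \<le> 3 * K / real (Suc i) ^ 2"
proof -
  have "0 \<le> K" using assms[of 1] by simp
  have bound: "\<bar>h a\<bar> \<le> K / real (Suc i) ^ 2" if "real (Suc i) \<le> a" for a
    using assms[of a] inverse_square_le_inverse_square_Suc[OF \<open>0 \<le> K\<close> that] that by simp
  have "\<bar>theta4_weighted h i\<bar> \<le> \<bar>h (2 * pi * real (Suc i))\<bar> + 2 * \<bar>h (pi * (2 * real i + 1))\<bar>"
    unfolding theta4_weighted_def by simp
  then show ?thesis
    using bound[OF theta4_frequencies_ge(1)] bound[OF theta4_frequencies_ge(2)] by simp
qed

lemma summable_inverse_square_bound:
  fixes g :: "nat \<Rightarrow> real"
  assumes "\<And>i. \<bar>g i\<bar> \<le> C / real (Suc i) ^ 2"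
  shows "summable g"
proof (rule summable_comparison_test')
  have "summable (\<lambda>n. inverse (real n ^ 2))" by (rule inverse_power_summable) simp
  then have "summable (\<lambda>n. inverse (real (Suc n) ^ 2))" by (subst summable_Suc_iff)
  then have "summable (\<lambda>n. C * inverse (real (Suc n) ^ 2))" by (rule summable_mult)
  then show "summable (\<lambda>n. C / real (Suc n) ^ 2)" by (simp add: divide_inverse)
  show "norm (g n) \<le> C / real (Suc n) ^ 2" for n using assms by simp
qed

lemma has_field_derivative_suminf_inverse_square_bound:
  fixes g g' :: "nat \<Rightarrow> real \<Rightarrow> real"
  assumes "0 < x"
    and deriv: "\<And>n y. 0 < y \<Longrightarrow> (g n has_field_derivative g' n y) (at y)"
    and bound: "\<And>n y. x / 2 \<le> y \<Longrightarrow> \<bar>g' n y\<bar> \<le> C / real (Suc n) ^ 2"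
    and "summable (\<lambda>n. g n x)"
  shows "((\<lambda>y. \<Sum>n. g n y) has_field_derivative (\<Sum>n. g' n x)) (at x)"
proof (rule has_field_derivative_series'(2)[where S = "{x / 2<..}" and x0 = x])
  show "(g n has_field_derivative g' n y) (at y within {x / 2<..})" if "y \<in> {x / 2<..}" for n y
    using that assms(1) by (intro has_field_derivative_at_within[OF deriv]) simp
  show "uniformly_convergent_on {x / 2<..} (\<lambda>n y. \<Sum>i<n. g' i y)"
  proof (rule Weierstrass_m_test')
    show "norm (g' n y) \<le> C / real (Suc n) ^ 2" if "y \<in> {x / 2<..}" for n y
      using that bound by simp
    show "summable (\<lambda>n. C / real (Suc n) ^ 2)"
      by (rule summable_inverse_square_bound[where C = "\<bar>C\<bar>"]) simp
  qed
  show "x \<in> interior {x / 2<..}" "x \<in> {x / 2<..}"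
    using assms(1) by (simp_all add: interior_open)
qed (simp_all add: assms(4))

lemma has_field_derivative_theta4_weighted:
  assumes "\<And>a. 1 \<le> a \<Longrightarrow> (h a has_field_derivative h' a x) (at x)"
  shows "((\<lambda>y. theta4_weighted (\<lambda>a. h a y) i) has_field_derivative
    theta4_weighted (\<lambda>a. h' a x) i) (at x)"
proof -
  have "1 \<le> real (Suc i)" by simp
  then show ?thesis
    unfolding theta4_weighted_def using theta4_frequencies_ge[of i]
    by (intro DERIV_add DERIV_cmult assms) linarith+
qed

lemma summable_theta4_weighted:
  assumes "\<And>a. 1 \<le> a \<Longrightarrow> \<bar>h a\<bar> \<le> K / a\<^sup>2"
  shows "summable (theta4_weighted h)"
  by (rule summable_inverse_square_bound[OF abs_theta4_weighted_le[OF assms]])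

definition log_theta4 :: "real \<Rightarrow> real" where
  "log_theta4 x = (\<Sum>i. theta4_weighted (\<lambda>a. log_factor a x) i)"

definition log_theta4' :: "real \<Rightarrow> real" where
  "log_theta4' x = (\<Sum>i. theta4_weighted (\<lambda>a. log_factor' a x) i)"

definition log_theta4'' :: "real \<Rightarrow> real" where
  "log_theta4'' x = (\<Sum>i. theta4_weighted (\<lambda>a. log_factor'' a x) i)"

lemma has_field_derivative_log_theta4:
  assumes "0 < x"
  shows "(log_theta4 has_field_derivative log_theta4' x) (at x)"
  unfolding log_theta4_def[abs_def] log_theta4'_def
proof (rule has_field_derivative_suminf_inverse_square_bound[OF assms])
  show "((\<lambda>y. theta4_weighted (\<lambda>a. log_factor a y) n) has_field_derivative
      theta4_weighted (\<lambda>a. log_factor' a y) n) (at y)" if "0 < y" for n y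
    using that
    by (intro has_field_derivative_theta4_weighted has_field_derivative_log_factor) simp_all
  show "\<bar>theta4_weighted (\<lambda>a. log_factor' a y) n\<bar> \<le> 3 * (6 / (x / 2) ^ 3) / real (Suc n) ^ 2"
    if "x / 2 \<le> y" for n y
    using that assms by (intro abs_theta4_weighted_le abs_log_factor'_le) simp_all
  show "summable (\<lambda>n. theta4_weighted (\<lambda>a. log_factor a x) n)"
    using assms by (intro summable_theta4_weighted[where K = "2 / x\<^sup>2"] abs_log_factor_le) simp_all
qed

lemma has_field_derivative_log_theta4':
  assumes "0 < x"
  shows "(log_theta4' has_field_derivative log_theta4'' x) (at x)"
  unfolding log_theta4'_def[abs_def] log_theta4''_def
proof (rule has_field_derivative_suminf_inverse_square_bound[OF assms])
  show "((\<lambda>y. theta4_weighted (\<lambda>a. log_factor' a y) n) has_field_derivative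
      theta4_weighted (\<lambda>a. log_factor'' a y) n) (at y)" if "0 < y" for n y
    using that
    by (intro has_field_derivative_theta4_weighted has_field_derivative_log_factor') simp_all
  show "\<bar>theta4_weighted (\<lambda>a. log_factor'' a y) n\<bar> \<le> 3 * (28 / (x / 2) ^ 4) / real (Suc n) ^ 2"
    if "x / 2 \<le> y" for n y
    using that assms by (intro abs_theta4_weighted_le abs_log_factor''_le) simp_all
  show "summable (\<lambda>n. theta4_weighted (\<lambda>a. log_factor' a x) n)"
    using assms
    by (intro summable_theta4_weighted[where K = "6 / x ^ 3"] abs_log_factor'_le) simp_all
qed

lemma theta4_eq_exp_log_theta4:
  assumes "0 < x"
  shows "theta4 x = exp (log_theta4 x)"
proof -
  define q where "q = exp (- pi * x)"
  have q: "0 < q" "q < 1" using assms by (simp_all add: q_def)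
  have q_power: "q ^ m = exp (- (pi * real m * x))" for m
    by (simp add: q_def flip: exp_of_nat_mult)
  define A where "A i = log_factor (2 * pi * real (Suc i)) x" for i
  define B where "B i = log_factor (pi * (2 * real i + 1)) x" for i
  have summable_log_factor: "summable (\<lambda>i. log_factor (f i) x)"
    if "\<And>i. real (Suc i) \<le> f i" for f
  proof (rule summable_inverse_square_bound)
    show "\<bar>log_factor (f i) x\<bar> \<le> (2 / x\<^sup>2) / real (Suc i) ^ 2" for i
      using abs_log_factor_le[OF _ assms, of "f i"] that[of i]
        inverse_square_le_inverse_square_Suc[of "2 / x\<^sup>2" i "f i"]
      by (simp add: order_less_le_trans[of 0 "real (Suc i)"])
  qed
  have "summable A" "summable B"
    unfolding A_def B_def using theta4_frequencies_ge by (intro summable_log_factor; simp)+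
  have "theta4 x = 1 + 2 * (\<Sum>k. (-1) ^ Suc k * q ^ (Suc k * Suc k))"
    using theta4_eq_series[OF assms] by (simp add: q_def)
  also have "\<dots> = q_pochhammer_inf (q\<^sup>2) * exp (\<Sum>i. ln (1 - q ^ (2 * i + 1))) ^ 2"
    by (rule jacobi_triple_product_theta4[OF q])
  also have "q_pochhammer_inf (q\<^sup>2) = exp (\<Sum>i. A i)"
  proof -
    have "(q\<^sup>2) ^ Suc i = exp (- (2 * pi * real (Suc i) * x))" for i
      by (simp only: power_mult[of q 2 "Suc i", symmetric] q_power[of "2 * Suc i"])
        (simp add: algebra_simps)
    then show ?thesis unfolding q_pochhammer_inf_def A_def log_factor_def by simp
  qed
  also have "(\<Sum>i. ln (1 - q ^ (2 * i + 1))) = (\<Sum>i. B i)"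
  proof -
    have "q ^ (2 * i + 1) = exp (- (pi * (2 * real i + 1) * x))" for i
      by (simp only: q_power) (simp add: algebra_simps)
    then show ?thesis unfolding B_def log_factor_def by simp
  qed
  also have "exp (\<Sum>i. A i) * exp (\<Sum>i. B i) ^ 2 = exp ((\<Sum>i. A i) + 2 * (\<Sum>i. B i))"
    by (simp add: power2_eq_square flip: exp_add)
  also have "(\<Sum>i. A i) + 2 * (\<Sum>i. B i) = (\<Sum>i. A i + 2 * B i)"
    using suminf_add[OF \<open>summable A\<close> summable_mult[OF \<open>summable B\<close>]] suminf_mult[OF \<open>summable B\<close>]
    by simp
  also have "\<dots> = log_theta4 x"
    by (simp add: log_theta4_def theta4_weighted_def A_def B_def)
  finally show ?thesis .
qed

lemma log_theta4'_pos:
  assumes "0 < x"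
  shows "0 < log_theta4' x"
  unfolding log_theta4'_def
proof (rule suminf_pos)
  show "summable (theta4_weighted (\<lambda>a. log_factor' a x))"
    using assms
    by (intro summable_theta4_weighted[where K = "6 / x ^ 3"] abs_log_factor'_le) simp_all
  show "0 < theta4_weighted (\<lambda>a. log_factor' a x) i" for i
    using assms by (simp add: theta4_weighted_def log_factor'_pos add_pos_pos)
qed

lemma log_theta4_derivs_combination_neg:
  assumes "0 < x"
  shows "x * log_theta4'' x + log_theta4' x < 0"
proof -
  define w where "w i = x * theta4_weighted (\<lambda>a. log_factor'' a x) i
    + theta4_weighted (\<lambda>a. log_factor' a x) i" for i
  have s1: "summable (theta4_weighted (\<lambda>a. log_factor' a x))"
    and s2: "summable (theta4_weighted (\<lambda>a. log_factor'' a x))"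
    using assms by (intro summable_theta4_weighted[where K = "6 / x ^ 3"] abs_log_factor'_le
        summable_theta4_weighted[where K = "28 / x ^ 4"] abs_log_factor''_le; simp)+
  then have "x * log_theta4'' x + log_theta4' x = (\<Sum>i. w i)"
    using suminf_add[OF summable_mult[OF s2, of x] s1] suminf_mult[OF s2, of x]
    by (simp add: log_theta4'_def log_theta4''_def w_def)
  also have "\<dots> < 0"
  proof -
    have neg: "w i < 0" for i
    proof -
      have "x * log_factor'' (2 * pi * real (Suc i)) x + log_factor' (2 * pi * real (Suc i)) x < 0"
        and "x * log_factor'' (pi * (2 * real i + 1)) x + log_factor' (pi * (2 * real i + 1)) x < 0"
        using assms by (intro log_factor_derivs_combination_neg; simp)+
      then show ?thesis by (simp add: w_def theta4_weighted_def algebra_simps)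
    qed
    have "summable w"
      unfolding w_def using s1 s2 by (intro summable_add summable_mult)
    have "0 < (\<Sum>i. - w i)"
      by (rule suminf_pos[OF summable_minus[OF \<open>summable w\<close>]]) (simp add: neg)
    then show ?thesis by (simp add: suminf_minus[OF \<open>summable w\<close>])
  qed
  finally show ?thesis .
qed

lemma has_field_derivative_theta4:
  assumes "0 < x"
  shows "(theta4 has_field_derivative theta4 x * log_theta4' x) (at x)"
proof -
  have "((\<lambda>y. exp (log_theta4 y)) has_field_derivative exp (log_theta4 x) * log_theta4' x) (at x)"
    by (rule DERIV_chain2[OF DERIV_exp has_field_derivative_log_theta4[OF assms]])
  then have "((\<lambda>y. exp (log_theta4 y)) has_field_derivative theta4 x * log_theta4' x) (at x)"
    by (simp only: theta4_eq_exp_log_theta4[OF assms])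
  then show ?thesis
    by (rule has_field_derivative_transform_within_open[where S = "{0<..}"])
      (simp_all add: assms theta4_eq_exp_log_theta4)
qed

lemma deriv_theta4: "0 < x \<Longrightarrow> deriv theta4 x = theta4 x * log_theta4' x"
  by (rule DERIV_imp_deriv[OF has_field_derivative_theta4])

lemma deriv_deriv_theta4:
  assumes "0 < x"
  shows "deriv (deriv theta4) x = theta4 x * ((log_theta4' x)\<^sup>2 + log_theta4'' x)"
proof -
  have "((\<lambda>y. theta4 y * log_theta4' y) has_field_derivative
      theta4 x * log_theta4' x * log_theta4' x + log_theta4'' x * theta4 x) (at x)"
    using has_field_derivative_theta4[OF assms] has_field_derivative_log_theta4'[OF assms]
    by (rule DERIV_mult)
  then have "(deriv theta4 has_field_derivative
      theta4 x * log_theta4' x * log_theta4' x + log_theta4'' x * theta4 x) (at x)"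
    by (rule has_field_derivative_transform_within_open[where S = "{0<..}"])
      (simp_all add: assms deriv_theta4)
  then show ?thesis
    by (simp add: DERIV_imp_deriv power2_eq_square algebra_simps)
qed

theorem theorem4:
  fixes s :: real
  assumes "s > 0"
  shows "deriv (deriv theta4) s * theta4 s - (deriv theta4 s)\<^sup>2 < - (deriv theta4 s * theta4 s / s)
         \<and> - (deriv theta4 s * theta4 s / s) < 0"
proof -
  have "0 < (theta4 s)\<^sup>2" by (simp add: theta4_eq_exp_log_theta4[OF assms])
  have lhs: "deriv (deriv theta4) s * theta4 s - (deriv theta4 s)\<^sup>2 = (theta4 s)\<^sup>2 * log_theta4'' s"
    and rhs: "- (deriv theta4 s * theta4 s / s) = (theta4 s)\<^sup>2 * (- log_theta4' s / s)"
    using assms by (simp_all add: deriv_theta4 deriv_deriv_theta4 power2_eq_square algebra_simps)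
  have "log_theta4'' s < - log_theta4' s / s"
    using log_theta4_derivs_combination_neg[OF assms] assms by (simp add: field_simps)
  moreover have "- log_theta4' s / s < 0"
    using log_theta4'_pos[OF assms] assms by simp
  ultimately show ?thesis
    unfolding lhs rhs using \<open>0 < (theta4 s)\<^sup>2\<close> by (blast intro: mult_strict_left_mono mult_pos_neg)
qed

end
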